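(* Let $\mathcal D=\{x\in\mathbb R^d:Bx\le c\}$ be a nonempty bounded polytope, $A\in\mathbb R^{m\times d}$, $b\in\mathbb R^d$, and $f(x):=g(Ax)+\langle b,x\rangle$, where $g$ is continuously differentiable on an open set containing $A\mathcal D$ and $\mu_g$-strongly convex on $A\mathcal D$ (Euclidean norm) with $\mu_g>0$. Let $\mathcal X^*:=\arg\min_{x\in\mathcal D}f(x)$, $G:=\max_{x\in\mathcal D}\|\nabla g(Ax)\|$, $M:=\mathrm{diam}(\mathcal D)$, $M_A:=\mathrm{diam}(A\mathcal D)$, and let $\theta>0$ be a Hoffman constant for the matrix $\begin{pmatrix}A\\ b^\top\\ B\end{pmatrix}$ as defined in the context. Then for every $x\in\mathcal D$ and $x^*\in\mathcal X^*$, $$f(x^* )-f(x)-2\langle\nabla f(x),x^*-x\rangle\ \ge\ 2\tilde\mu\,d(x,\mathcal X^* )^2,\qquad \tilde\mu:=\frac{1}{2\theta^2\big(\|b\|M+3GM_A+\frac{2}{\mu_g}(G^2+1)\big)}.$$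
   Context: Euclidean norms; $d(x,\mathcal X^* )=\min_{y\in\mathcal X^*}\|x-y\|$; diameters are Euclidean. Hoffman constant: $\theta>0$ is such that for every $t\in\mathbb R^m$ and $s\in\mathbb R$ for which $P_{t,s}:=\{y\in\mathbb R^d:Ay=t,\ \langle b,y\rangle=s,\ By\le c\}$ is nonempty, and every $x$ with $Bx\le c$, one has $d(x,P_{t,s})\le\theta\,\|(Ax-t,\ \langle b,x\rangle-s)\|$. *)

theory Defs
  imports "HOL-Analysis.Analysis"
begin

definition strongly_convex_on :: "'a::real_inner set \<Rightarrow> real \<Rightarrow> ('a \<Rightarrow> real) \<Rightarrow> bool" where
  "strongly_convex_on S mu g \<longleftrightarrow>
     (\<forall>x\<in>S. \<forall>y\<in>S. \<forall>t::real. 0 \<le> t \<and> t \<le> 1 \<longrightarrow>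
        g (t *\<^sub>R x + (1 - t) *\<^sub>R y) \<le> t * g x + (1 - t) * g y - mu / 2 * t * (1 - t) * (norm (x - y))\<^sup>2)"

definition polyhedron :: "real^'d^'k \<Rightarrow> real^'k \<Rightarrow> (real^'d) set" where
  "polyhedron B c = {y. \<forall>i. (B *v y) $ i \<le> c $ i}"

definition hoffman_constant :: "real^'d^'m \<Rightarrow> real^'d \<Rightarrow> real^'d^'k \<Rightarrow> real^'k \<Rightarrow> real \<Rightarrow> bool" where
  "hoffman_constant A b B c \<theta> \<longleftrightarrow> \<theta> > 0 \<and>
     (\<forall>(t::real^'m) (s::real).
        let P = {y \<in> polyhedron B c. A *v y = t \<and> b \<bullet> y = s} in
        P \<noteq> {} \<longrightarrow>
        (\<forall>x \<in> polyhedron B c. infdist x P \<le> \<theta> * norm (A *v x - t, b \<bullet> x - s)))"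

end

theory Submission
  imports Defs
begin

text \<open>Strong convexity of \<open>g\<close> forces all minimizers of \<open>f\<close> on \<open>D\<close> to share the values of \<open>A x\<close>
  and \<open>\<langle>b, x\<rangle>\<close>, so the optimal set is a fibre of \<open>(A, b\<^sup>T)\<close> over the polytope and Hoffman's bound
  controls \<open>d(x, X\<^sup>*)\<^sup>2\<close> by \<open>\<theta>\<^sup>2 (\<parallel>A x - A x\<^sup>*\<parallel>\<^sup>2 + \<langle>b, x - x\<^sup>*\<rangle>\<^sup>2)\<close>. The gradient inequality bounds the
  left-hand side below by \<open>f x - f x\<^sup>* + \<mu>\<^sub>g \<parallel>A x - A x\<^sup>*\<parallel>\<^sup>2\<close>, while \<open>\<langle>b, x - x\<^sup>*\<rangle>\<close> differs from the
  gap \<open>f x - f x\<^sup>*\<close> by \<open>g (A x) - g (A x\<^sup>*)\<close>, which is at most \<open>G \<parallel>A x - A x\<^sup>*\<parallel>\<close> in absolute value;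
  the diameters bound the remaining cross terms.\<close>

lemma polyhedron_eq_Inter: "polyhedron B c = (\<Inter>i. {y. B $ i \<bullet> y \<le> c $ i})"
  by (auto simp: polyhedron_def matrix_vector_mul_component)

lemma convex_polyhedron: "convex (polyhedron B c)"
  unfolding polyhedron_eq_Inter by (intro convex_INT convex_halfspace_le)

lemma closed_polyhedron: "closed (polyhedron B c)"
  unfolding polyhedron_eq_Inter by (auto intro: closed_halfspace_le)

lemma norm_le_Sup_norm_image:
  fixes h :: "'a::topological_space \<Rightarrow> 'b::real_normed_vector"
  assumes "compact S" "continuous_on S h" "x \<in> S"
  shows "norm (h x) \<le> Sup ((\<lambda>x. norm (h x)) ` S)"
proof -
  have "bounded (h ` S)" using assms by (intro compact_imp_bounded compact_continuous_image)
  then have "bdd_above ((\<lambda>x. norm (h x)) ` S)"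
    by (auto simp: bounded_iff bdd_above_def)
  then show ?thesis using assms(3) by (intro cSup_upper) auto
qed

lemma strongly_convex_on_gradient_ineq:
  fixes g :: "'a::real_inner \<Rightarrow> real"
  assumes sc: "strongly_convex_on S mu g" and "x \<in> S" "y \<in> S"
    and der: "(g has_derivative (\<lambda>h. gx \<bullet> h)) (at x)"
  shows "g x + gx \<bullet> (y - x) + mu / 2 * (norm (y - x))\<^sup>2 \<le> g y"
proof -
  define \<phi> where "\<phi> = (\<lambda>t::real. g (x + t *\<^sub>R (y - x)))"
  define n where "n = (norm (y - x))\<^sup>2"
  have "((g \<circ> (\<lambda>t. x + t *\<^sub>R (y - x))) has_derivative ((\<lambda>h. gx \<bullet> h) \<circ> (\<lambda>t. t *\<^sub>R (y - x)))) (at 0)"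
    by (rule diff_chain_at) (auto intro!: derivative_eq_intros simp: der)
  then have "(\<phi> has_field_derivative gx \<bullet> (y - x)) (at 0)"
    by (simp add: \<phi>_def has_field_derivative_def o_def mult_commute_abs)
  then have slope: "((\<lambda>t. (\<phi> t - \<phi> 0) / t) \<longlongrightarrow> gx \<bullet> (y - x)) (at_right 0)"
    by (auto simp: has_field_derivative_iff intro: tendsto_within_subset)
  have bound: "((\<lambda>t. g y - g x - mu / 2 * (1 - t) * n) \<longlongrightarrow> g y - g x - mu / 2 * n) (at_right 0)"
    by (auto intro!: tendsto_eq_intros)
  have "\<forall>\<^sub>F t in at_right 0. (\<phi> t - \<phi> 0) / t \<le> g y - g x - mu / 2 * (1 - t) * n"
    using eventually_at_right_real[OF zero_less_one]
  proof (rule eventually_mono)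
    fix t :: real assume t: "t \<in> {0<..<1}"
    have "g (t *\<^sub>R y + (1 - t) *\<^sub>R x) \<le> t * g y + (1 - t) * g x - mu / 2 * t * (1 - t) * n"
      using sc t \<open>x \<in> S\<close> \<open>y \<in> S\<close> unfolding strongly_convex_on_def n_def by auto
    moreover have "t *\<^sub>R y + (1 - t) *\<^sub>R x = x + t *\<^sub>R (y - x)" by (simp add: algebra_simps)
    ultimately have "\<phi> t - \<phi> 0 \<le> t * (g y - g x - mu / 2 * (1 - t) * n)"
      unfolding \<phi>_def by (simp add: algebra_simps)
    with t show "(\<phi> t - \<phi> 0) / t \<le> g y - g x - mu / 2 * (1 - t) * n"
      by (simp add: pos_divide_le_eq mult.commute)
  qed
  then have "gx \<bullet> (y - x) \<le> g y - g x - mu / 2 * n"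
    by (rule tendsto_le[OF trivial_limit_at_right_real bound slope])
  then show ?thesis unfolding n_def by simp
qed

lemma strongly_convex_on_abs_diff_le:
  fixes g :: "'a::real_inner \<Rightarrow> real"
  assumes sc: "strongly_convex_on S mu g" and "0 \<le> mu" and "p \<in> S" "q \<in> S"
    and dp: "(g has_derivative (\<lambda>h. gp \<bullet> h)) (at p)"
    and dq: "(g has_derivative (\<lambda>h. gq \<bullet> h)) (at q)"
    and "norm gp \<le> G" "norm gq \<le> G"
  shows "\<bar>g q - g p\<bar> \<le> G * norm (q - p)"
proof -
  have "0 \<le> mu / 2 * (norm (q - p))\<^sup>2" "0 \<le> mu / 2 * (norm (p - q))\<^sup>2"
    using \<open>0 \<le> mu\<close> by simp_all
  moreover note strongly_convex_on_gradient_ineq[OF sc \<open>p \<in> S\<close> \<open>q \<in> S\<close> dp]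
    strongly_convex_on_gradient_ineq[OF sc \<open>q \<in> S\<close> \<open>p \<in> S\<close> dq]
  moreover have "\<bar>gp \<bullet> (q - p)\<bar> \<le> G * norm (q - p)"
    using Cauchy_Schwarz_ineq2[of gp "q - p"] mult_right_mono[OF \<open>norm gp \<le> G\<close>, of "norm (q - p)"]
    by simp
  moreover have "\<bar>gq \<bullet> (p - q)\<bar> \<le> G * norm (q - p)"
    using Cauchy_Schwarz_ineq2[of gq "p - q"] mult_right_mono[OF \<open>norm gq \<le> G\<close>, of "norm (q - p)"]
    by (simp add: norm_minus_commute)
  ultimately show ?thesis by linarith
qed

text \<open>In the application \<open>\<Delta> = f x - f x\<^sup>*\<close> splits into \<open>u = \<langle>b, x - x\<^sup>*\<rangle>\<close> and
  \<open>v = g (A x) - g (A x\<^sup>*)\<close>, \<open>r = \<parallel>A x - A x\<^sup>*\<parallel>\<close>, and \<open>d\<close> is the distance to the optimal set.\<close>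
lemma error_bound_arith:
  fixes \<Delta> u v r d \<beta> G R mu \<theta> :: real
  assumes "\<Delta> = u + v" "0 \<le> \<Delta>" "\<bar>v\<bar> \<le> G * r" "\<bar>u\<bar> \<le> \<beta>"
    and "0 \<le> r" "r \<le> R" "0 \<le> G" "0 < mu" "0 < \<theta>"
    and d: "d\<^sup>2 \<le> \<theta>\<^sup>2 * (r\<^sup>2 + u\<^sup>2)"
  shows "2 * (1 / (2 * \<theta>\<^sup>2 * (\<beta> + 3 * G * R + 2 / mu * (G\<^sup>2 + 1)))) * d\<^sup>2 \<le> \<Delta> + mu * r\<^sup>2"
proof -
  define K where "K = \<beta> + 3 * G * R + 2 / mu * (G\<^sup>2 + 1)"
  have GR: "G * r \<le> G * R" using assms by (simp add: mult_left_mono)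
  have P: "0 \<le> \<beta> + 3 * G * R" using assms GR by simp
  have "\<Delta> \<le> \<beta> + G * R" using assms GR by linarith
  then have "\<Delta>\<^sup>2 \<le> \<Delta> * (\<beta> + G * R)"
    using mult_left_mono \<open>0 \<le> \<Delta>\<close> by (simp add: power2_eq_square)
  moreover have "G * \<Delta> * r \<le> G * \<Delta> * R" using assms by (simp add: mult_left_mono)
  moreover have "\<bar>u\<bar> \<le> \<Delta> + G * r" using assms by linarith
  then have "u\<^sup>2 \<le> (\<Delta> + G * r)\<^sup>2" using power_mono[of "\<bar>u\<bar>" _ 2] by simp
  ultimately have u2: "u\<^sup>2 \<le> \<Delta> * (\<beta> + 3 * G * R) + G\<^sup>2 * r\<^sup>2"
    by (simp add: power2_eq_square algebra_simps)
  have "K * (\<Delta> + mu * r\<^sup>2) = \<Delta> * (\<beta> + 3 * G * R) + 2 / mu * (G\<^sup>2 + 1) * \<Delta>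
      + mu * r\<^sup>2 * (\<beta> + 3 * G * R) + 2 * r\<^sup>2 + 2 * (G\<^sup>2 * r\<^sup>2)"
    unfolding K_def using assms by (simp add: field_simps)
  moreover have "0 \<le> 2 / mu * (G\<^sup>2 + 1) * \<Delta>" "0 \<le> mu * r\<^sup>2 * (\<beta> + 3 * G * R)"
    using assms P by simp_all
  moreover have "0 \<le> G\<^sup>2 * r\<^sup>2" "0 \<le> r\<^sup>2" by simp_all
  ultimately have "r\<^sup>2 + u\<^sup>2 \<le> K * (\<Delta> + mu * r\<^sup>2)"
    using u2 by linarith
  then have "d\<^sup>2 \<le> \<theta>\<^sup>2 * (K * (\<Delta> + mu * r\<^sup>2))"
    using d mult_left_mono[of _ _ "\<theta>\<^sup>2"] by fastforce
  moreover have "0 < K" unfolding K_def using P assms by (simp add: add_nonneg_pos)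
  ultimately show ?thesis unfolding K_def[symmetric] using assms by (simp add: field_simps)
qed

lemma minimizers_eq_fibre:
  fixes L :: "'a::real_inner \<Rightarrow> 'b::real_inner"
  assumes "linear L" "convex D" and sc: "strongly_convex_on (L ` D) mu g" and "0 < mu"
    and "xs \<in> D" and xs_min: "\<forall>y\<in>D. g (L xs) + b \<bullet> xs \<le> g (L y) + b \<bullet> y"
  shows "{z \<in> D. \<forall>y\<in>D. g (L z) + b \<bullet> z \<le> g (L y) + b \<bullet> y} = {z \<in> D. L z = L xs \<and> b \<bullet> z = b \<bullet> xs}"
proof (intro equalityI subsetI)
  fix z assume "z \<in> {z \<in> D. \<forall>y\<in>D. g (L z) + b \<bullet> z \<le> g (L y) + b \<bullet> y}"
  then have "z \<in> D" and z_min: "\<forall>y\<in>D. g (L z) + b \<bullet> z \<le> g (L y) + b \<bullet> y" by auto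
  have f_eq: "g (L z) + b \<bullet> z = g (L xs) + b \<bullet> xs"
    using z_min xs_min \<open>z \<in> D\<close> \<open>xs \<in> D\<close> by (meson order.antisym)
  define m where "m = (1/2::real) *\<^sub>R z + (1 - 1/2) *\<^sub>R xs"
  have "m \<in> D" unfolding m_def using \<open>convex D\<close> \<open>z \<in> D\<close> \<open>xs \<in> D\<close> by (intro convexD) auto
  have "L m = (1/2::real) *\<^sub>R L z + (1 - 1/2) *\<^sub>R L xs"
    unfolding m_def using \<open>linear L\<close> by (simp add: linear_add linear_scale)
  moreover have "g ((1/2::real) *\<^sub>R L z + (1 - 1/2) *\<^sub>R L xs)
      \<le> 1/2 * g (L z) + (1 - 1/2) * g (L xs) - mu / 2 * (1/2) * (1 - 1/2) * (norm (L z - L xs))\<^sup>2"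
    using \<open>z \<in> D\<close> \<open>xs \<in> D\<close> by (intro sc[unfolded strongly_convex_on_def, rule_format]) auto
  moreover have "b \<bullet> m = 1/2 * (b \<bullet> z) + 1/2 * (b \<bullet> xs)" unfolding m_def by (simp add: inner_add_right)
  moreover have "g (L xs) + b \<bullet> xs \<le> g (L m) + b \<bullet> m" using xs_min \<open>m \<in> D\<close> by blast
  ultimately have "mu / 8 * (norm (L z - L xs))\<^sup>2 \<le> 0" using f_eq by simp
  then have "L z = L xs" using \<open>0 < mu\<close> by (simp add: mult_le_0_iff)
  with f_eq \<open>z \<in> D\<close> show "z \<in> {z \<in> D. L z = L xs \<and> b \<bullet> z = b \<bullet> xs}" by simp
qed (use xs_min in auto)

lemma first_order_gap_ge:
  fixes A :: "real^'d^'m" and g :: "real^'m \<Rightarrow> real"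
  assumes "g (A *v x) + gx \<bullet> (A *v y - A *v x) + mu / 2 * (norm (A *v y - A *v x))\<^sup>2 \<le> g (A *v y)"
  shows "(g (A *v y) + b \<bullet> y) - (g (A *v x) + b \<bullet> x) - 2 * ((transpose A *v gx + b) \<bullet> (y - x))
    \<ge> (g (A *v x) + b \<bullet> x) - (g (A *v y) + b \<bullet> y) + mu * (norm (A *v x - A *v y))\<^sup>2"
proof -
  have "(transpose A *v gx + b) \<bullet> (y - x) = gx \<bullet> (A *v y - A *v x) + b \<bullet> y - b \<bullet> x"
    by (simp add: inner_add_left inner_diff_right dot_lmul_matrix matrix_vector_mult_diff_distrib)
  with assms show ?thesis by (simp add: norm_minus_commute)
qed

lemma infdist_fibre_le_hoffman:
  assumes "hoffman_constant A b B c \<theta>" "x \<in> polyhedron B c" "xs \<in> polyhedron B c"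
  shows "(infdist x {z \<in> polyhedron B c. A *v z = A *v xs \<and> b \<bullet> z = b \<bullet> xs})\<^sup>2
    \<le> \<theta>\<^sup>2 * ((norm (A *v x - A *v xs))\<^sup>2 + (b \<bullet> x - b \<bullet> xs)\<^sup>2)"
proof -
  have "infdist x {z \<in> polyhedron B c. A *v z = A *v xs \<and> b \<bullet> z = b \<bullet> xs}
      \<le> \<theta> * sqrt ((norm (A *v x - A *v xs))\<^sup>2 + (b \<bullet> x - b \<bullet> xs)\<^sup>2)"
    using assms unfolding hoffman_constant_def Let_def norm_prod_def by auto
  from power_mono[OF this infdist_nonneg, of 2] show ?thesis
    by (simp add: power_mult_distrib)
qed

theorem mainTheorem10:
  fixes A :: "real^'d^'m" and b :: "real^'d" and B :: "real^'d^'k" and c :: "real^'k"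
    and g :: "real^'m \<Rightarrow> real" and gg :: "real^'m \<Rightarrow> real^'m"
    and U :: "(real^'m) set" and mu_g \<theta> :: real
  defines "D \<equiv> polyhedron B c"
    and "f \<equiv> (\<lambda>x. g (A *v x) + b \<bullet> x)"
    and "grad_f \<equiv> (\<lambda>x. transpose A *v gg (A *v x) + b)"
  assumes D_ne: "D \<noteq> {}" and D_bdd: "bounded D"
    and U_open: "open U" and U_sup: "(\<lambda>x. A *v x) ` D \<subseteq> U"
    and g_diff: "\<And>y. y \<in> U \<Longrightarrow> (g has_derivative (\<lambda>h. gg y \<bullet> h)) (at y)"
    and gg_cont: "continuous_on U gg"
    and mu_pos: "mu_g > 0"
    and g_sc: "strongly_convex_on ((\<lambda>x. A *v x) ` D) mu_g g"
    and hoff: "hoffman_constant A b B c \<theta>"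
  shows "\<forall>x\<in>D. \<forall>xs\<in>{z \<in> D. \<forall>y\<in>D. f z \<le> f y}.
     (let G = Sup ((\<lambda>x. norm (gg (A *v x))) ` D);
          M = diameter D;
          M_A = diameter ((\<lambda>x. A *v x) ` D);
          mu_t = 1 / (2 * \<theta>\<^sup>2 * (norm b * M + 3 * G * M_A + 2 / mu_g * (G\<^sup>2 + 1)))
      in f xs - f x - 2 * (grad_f x \<bullet> (xs - x))
           \<ge> 2 * mu_t * (infdist x {z \<in> D. \<forall>y\<in>D. f z \<le> f y})\<^sup>2)"
proof -
  define G where "G = Sup ((\<lambda>x. norm (gg (A *v x))) ` D)"
  define mu_t where "mu_t = 1 / (2 * \<theta>\<^sup>2 * (norm b * diameter D + 3 * G * diameter ((\<lambda>x. A *v x) ` D)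
    + 2 / mu_g * (G\<^sup>2 + 1)))"
  define X where "X = {z \<in> D. \<forall>y\<in>D. f z \<le> f y}"
  have "convex D" "compact D"
    using D_bdd convex_polyhedron closed_polyhedron unfolding D_def by (auto simp: compact_eq_bounded_closed)
  have G_bound: "norm (gg (A *v z)) \<le> G" if "z \<in> D" for z
    unfolding G_def using \<open>compact D\<close> that U_sup
    by (intro norm_le_Sup_norm_image continuous_on_compose2[OF gg_cont]
        linear_continuous_on matrix_vector_mul_bounded_linear) auto
  show ?thesis
    unfolding Let_def G_def[symmetric] mu_t_def[symmetric] X_def[symmetric]
  proof (intro ballI)
    fix x xs assume "x \<in> D" and "xs \<in> X"
    then have "xs \<in> D" and xs_min: "\<forall>y\<in>D. f xs \<le> f y" unfolding X_def by auto
    define r where "r = norm (A *v x - A *v xs)"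
    have "X = {z \<in> D. A *v z = A *v xs \<and> b \<bullet> z = b \<bullet> xs}"
      using minimizers_eq_fibre[OF matrix_vector_mul_linear \<open>convex D\<close> g_sc mu_pos \<open>xs \<in> D\<close>] xs_min
      unfolding X_def f_def by simp
    then have "(infdist x X)\<^sup>2 \<le> \<theta>\<^sup>2 * (r\<^sup>2 + (b \<bullet> x - b \<bullet> xs)\<^sup>2)"
      using infdist_fibre_le_hoffman[OF hoff] \<open>x \<in> D\<close> \<open>xs \<in> D\<close> unfolding r_def D_def by simp
    moreover have "\<bar>g (A *v x) - g (A *v xs)\<bar> \<le> G * r"
      unfolding r_def using \<open>x \<in> D\<close> \<open>xs \<in> D\<close> U_sup mu_pos
      by (intro strongly_convex_on_abs_diff_le[OF g_sc, where gp = "gg (A *v xs)" and gq = "gg (A *v x)"]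
          g_diff G_bound) auto
    moreover have "\<bar>b \<bullet> x - b \<bullet> xs\<bar> \<le> norm b * diameter D"
      using Cauchy_Schwarz_ineq2[of b "x - xs"] diameter_bounded_bound[OF D_bdd \<open>x \<in> D\<close> \<open>xs \<in> D\<close>]
      by (simp add: inner_diff_right dist_norm mult_left_mono order_trans)
    moreover have "r \<le> diameter ((\<lambda>x. A *v x) ` D)"
      unfolding r_def dist_norm[symmetric] using \<open>x \<in> D\<close> \<open>xs \<in> D\<close>
      by (intro diameter_bounded_bound bounded_linear_image D_bdd matrix_vector_mul_bounded_linear) auto
    moreover have "0 \<le> G" using order_trans[OF norm_ge_zero G_bound[OF \<open>x \<in> D\<close>]] .
    moreover have "0 \<le> f x - f xs" using xs_min \<open>x \<in> D\<close> by simp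
    ultimately have "2 * mu_t * (infdist x X)\<^sup>2 \<le> (f x - f xs) + mu_g * r\<^sup>2"
      using mu_pos hoff unfolding hoffman_constant_def mu_t_def
      by (intro error_bound_arith[where v = "g (A *v x) - g (A *v xs)"]) (auto simp: f_def r_def)
    moreover have "(f x - f xs) + mu_g * r\<^sup>2 \<le> f xs - f x - 2 * (grad_f x \<bullet> (xs - x))"
      using strongly_convex_on_gradient_ineq[OF g_sc _ _ g_diff] \<open>x \<in> D\<close> \<open>xs \<in> D\<close> U_sup
      unfolding f_def grad_f_def r_def by (intro first_order_gap_ge) auto
    ultimately show "f xs - f x - 2 * (grad_f x \<bullet> (xs - x)) \<ge> 2 * mu_t * (infdist x X)\<^sup>2"
      by linarith
  qed
qed

end
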